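(* The space $\overline{ARI}_{circneut}$ of circ-neutral moulds in $\overline{ARI}$ is closed under the $\overline{ari}$-bracket, hence forms a Lie algebra under it.
   Context: $\overline{ARI}$ is the space of moulds $A=(A^r)_{r\ge0}$ with $A^r\in\mathbb{Q}(v_1,\dots,v_r)$ and $A^0=0$. $A$ is circ-neutral if $\sum_{i=0}^{r-1}A(v_{i+1},\dots,v_r,v_1,\dots,v_i)=0$ for all $r>1$. For $A,B\in\overline{ARI}$ and $w=(v_1,\dots,v_r)$: $mu(A,B)(w)=\sum_{i=0}^rA(v_1,\dots,v_i)B(v_{i+1},\dots,v_r)$, $lu(A,B)=mu(A,B)-mu(B,A)$; $(\overline{amit}(B)\cdot A)(w)=\sum_{0\le i<j<r}A(v_1,\dots,v_i,v_{j+1},\dots,v_r)B(v_{i+1}-v_{j+1},\dots,v_j-v_{j+1})$; $(\overline{anit}(B)\cdot A)(w)=\sum_{1\le i<j\le r}A(v_1,\dots,v_i,v_{j+1},\dots,v_r)B(v_{i+1}-v_i,\dots,v_j-v_i)$; $\overline{arit}(B)=\overline{amit}(B)-\overline{anit}(B)$; and $\overline{ari}(A,B)=\overline{arit}(B)\cdot A-\overline{arit}(A)\cdot B+lu(A,B)$. *)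

theory Defs
  imports Main
begin

text \<open>A mould is modelled as a function on finite sequences (lists) of variables:
  the component A^r is A restricted to lists of length r.  Variables range over an
  abelian group 'a (differences v_i - v_j are needed), values lie in a commutative ring 'b.\<close>

type_synonym ('a, 'b) mould = "'a list \<Rightarrow> 'b"

definition in_ARI :: "('a, 'b::zero) mould \<Rightarrow> bool" where
  "in_ARI A \<longleftrightarrow> A [] = 0"

definition circ_neutral :: "('a, 'b::comm_monoid_add) mould \<Rightarrow> bool" where
  "circ_neutral A \<longleftrightarrow> (\<forall>w. length w > 1 \<longrightarrow> (\<Sum>i<length w. A (rotate i w)) = 0)"

definition mu :: "('a, 'b::comm_ring_1) mould \<Rightarrow> ('a, 'b) mould \<Rightarrow> ('a, 'b) mould" where
  "mu A B w = (\<Sum>i\<le>length w. A (take i w) * B (drop i w))"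

definition lu :: "('a, 'b::comm_ring_1) mould \<Rightarrow> ('a, 'b) mould \<Rightarrow> ('a, 'b) mould" where
  "lu A B w = mu A B w - mu B A w"

text \<open>(amit(B).A)(w) = sum_{0<=i<j<r} A(v1..vi, v_{j+1}..vr) B(v_{i+1}-v_{j+1},..,v_j-v_{j+1});
  with 0-based list indexing v_{j+1} = w ! j.\<close>
definition amit :: "('a::ab_group_add, 'b::comm_ring_1) mould \<Rightarrow> ('a, 'b) mould \<Rightarrow> ('a, 'b) mould" where
  "amit B A w = (\<Sum>j<length w. \<Sum>i<j.
      A (take i w @ drop j w) * B (map (\<lambda>x. x - w ! j) (take (j - i) (drop i w))))"

text \<open>(anit(B).A)(w) = sum_{1<=i<j<=r} A(v1..vi, v_{j+1}..vr) B(v_{i+1}-v_i,..,v_j-v_i);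
  with 0-based list indexing v_i = w ! (i - 1).\<close>
definition anit :: "('a::ab_group_add, 'b::comm_ring_1) mould \<Rightarrow> ('a, 'b) mould \<Rightarrow> ('a, 'b) mould" where
  "anit B A w = (\<Sum>j\<in>{1..length w}. \<Sum>i\<in>{1..<j}.
      A (take i w @ drop j w) * B (map (\<lambda>x. x - w ! (i - 1)) (take (j - i) (drop i w))))"

definition arit :: "('a::ab_group_add, 'b::comm_ring_1) mould \<Rightarrow> ('a, 'b) mould \<Rightarrow> ('a, 'b) mould" where
  "arit B A w = amit B A w - anit B A w"

definition ari :: "('a::ab_group_add, 'b::comm_ring_1) mould \<Rightarrow> ('a, 'b) mould \<Rightarrow> ('a, 'b) mould" where
  "ari A B w = arit B A w - arit A B w + lu A B w"

end

theory Submission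
  imports Defs
begin

text \<open>Write \<open>\<Sigma>\<^sub>c\<^sub>y\<^sub>c\<close> for the sum over all cyclic rotations of a word of length \<open>r\<close>.
  Under \<open>\<Sigma>\<^sub>c\<^sub>y\<^sub>c\<close> the terms of \<open>mu(A,B)\<close> run over all splittings of the cyclic word
  into two complementary arcs, read as (A-arc, B-arc); the same holds for \<open>mu(B,A)\<close> with the
  roles exchanged, so \<open>\<Sigma>\<^sub>c\<^sub>y\<^sub>c lu(A,B) = 0\<close> for all moulds.
  In \<open>\<Sigma>\<^sub>c\<^sub>y\<^sub>c\<close> of \<open>amit(B)\<cdot>A\<close> and of \<open>anit(B)\<cdot>A\<close>, group the terms by the block fed to \<open>B\<close>
  (cyclic position \<open>p\<close>, length \<open>l\<close>): the complementary arc of length \<open>r - l\<close> is then fed to \<open>A\<close>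
  in all of its rotations, so the coefficient of each \<open>B\<close>-term is \<open>\<Sigma>\<^sub>c\<^sub>y\<^sub>c A\<close> of that arc,
  which vanishes for circ-neutral \<open>A\<close> unless \<open>r - l = 1\<close>.  In that remaining case the variable
  just after the block (subtracted by \<open>amit\<close>) and the one just before it (subtracted by \<open>anit\<close>)
  coincide.  Hence \<open>\<Sigma>\<^sub>c\<^sub>y\<^sub>c arit(B)\<cdot>A = 0\<close>, and \<open>ari(A,B)\<close> is circ-neutral.\<close>

definition cyclic_seg :: "'a list \<Rightarrow> nat \<Rightarrow> nat \<Rightarrow> 'a list" where
  "cyclic_seg w q n = map (\<lambda>t. w ! ((q + t) mod length w)) [0..<n]"

lemma length_cyclic_seg [simp]: "length (cyclic_seg w q n) = n"
  by (simp add: cyclic_seg_def)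

lemma nth_cyclic_seg [simp]: "t < n \<Longrightarrow> cyclic_seg w q n ! t = w ! ((q + t) mod length w)"
  by (simp add: cyclic_seg_def)

lemma cyclic_seg_0 [simp]: "cyclic_seg w q 0 = []"
  by (simp add: cyclic_seg_def)

lemma cyclic_seg_cong_mod:
  "q mod length w = q' mod length w \<Longrightarrow> cyclic_seg w q n = cyclic_seg w q' n"
  unfolding cyclic_seg_def by (intro map_cong refl) (metis mod_add_left_eq)

lemma cyclic_seg_add_length [simp]:
  "cyclic_seg w (q + length w) n = cyclic_seg w q n"
  "cyclic_seg w (length w + q) n = cyclic_seg w q n"
  by (rule cyclic_seg_cong_mod, simp)+

lemma rotate_eq_cyclic_seg: "rotate k w = cyclic_seg w k (length w)"
  by (rule nth_equalityI) (auto simp: nth_rotate add.commute)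

lemma take_cyclic_seg: "i \<le> n \<Longrightarrow> take i (cyclic_seg w q n) = cyclic_seg w q i"
  by (rule nth_equalityI) auto

lemma drop_cyclic_seg: "i \<le> n \<Longrightarrow> drop i (cyclic_seg w q n) = cyclic_seg w (q + i) (n - i)"
  by (rule nth_equalityI) (auto simp: add.assoc)

lemma rotate_cyclic_seg:
  assumes "m \<le> n"
  shows "rotate m (cyclic_seg w q n) = cyclic_seg w (q + m) (n - m) @ cyclic_seg w q m"
proof (cases "m = n")
  case True
  then show ?thesis by simp
next
  case False
  with assms have "m mod length (cyclic_seg w q n) = m" by simp
  with assms show ?thesis by (simp add: rotate_drop_take take_cyclic_seg drop_cyclic_seg)
qed

lemma sum_pairs_by_gap:
  fixes a b :: nat
  shows "(\<Sum>j\<in>{a..<b}. \<Sum>i\<in>{a..<j}. f i j) = (\<Sum>l\<in>{1..<b-a}. \<Sum>i\<in>{a..<b-l}. f i (i + l))"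
proof -
  have "(\<Sum>j\<in>{a..<b}. \<Sum>i\<in>{a..<j}. f i j) = (\<Sum>(j, i)\<in>(SIGMA j:{a..<b}. {a..<j}). f i j)"
    by (rule sum.Sigma) auto
  also have "\<dots> = (\<Sum>(l, i)\<in>(SIGMA l:{1..<b-a}. {a..<b-l}). f i (i + l))"
    by (rule sum.reindex_bij_witness[where i="\<lambda>(l, i). (i + l, i)" and j="\<lambda>(j, i). (j - i, i)"]) auto
  also have "\<dots> = (\<Sum>l\<in>{1..<b-a}. \<Sum>i\<in>{a..<b-l}. f i (i + l))"
    by (rule sum.Sigma[symmetric]) auto
  finally show ?thesis .
qed

lemma sum_lessThan_shift_periodic:
  fixes G :: "nat \<Rightarrow> 'b::comm_monoid_add"
  assumes "\<And>x. G (x + n) = G x"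
  shows "(\<Sum>k<n. G (k + i)) = (\<Sum>k<n. G k)"
proof (induction i)
  case (Suc i)
  have "(\<Sum>k<n. G (Suc k + i)) = (\<Sum>k<n. G (k + i))"
  proof (cases n)
    case (Suc m)
    have "(\<Sum>k<Suc m. G (Suc k + i)) = G i + (\<Sum>k<m. G (Suc k + i))"
      using assms[of i] Suc by (simp add: add.commute)
    also have "\<dots> = (\<Sum>k<Suc m. G (k + i))"
      using sum.lessThan_Suc_shift[of "\<lambda>k. G (k + i)" m] by simp
    finally show ?thesis using Suc by simp
  qed simp
  then show ?case using Suc by simp
qed simp

lemma sum_lessThan_reverse_periodic:
  fixes G :: "nat \<Rightarrow> 'b::comm_monoid_add"
  assumes "\<And>x. G (x + n) = G x"
  shows "(\<Sum>i<n. G (n - i)) = (\<Sum>k<n. G k)"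
proof -
  have "(\<Sum>i<n. G (n - i)) = (\<Sum>k<n. G (k + 1))"
    by (rule sum.reindex_bij_witness[where i="\<lambda>k. n - 1 - k" and j="\<lambda>i. n - 1 - i"])
      (auto simp: Suc_diff_Suc)
  also have "\<dots> = (\<Sum>k<n. G k)"
    using assms by (rule sum_lessThan_shift_periodic)
  finally show ?thesis .
qed

lemma sum_atLeastAtMost_reverse:
  fixes G :: "nat \<Rightarrow> 'b::comm_monoid_add"
  shows "(\<Sum>i\<in>{1..n}. G (n - i)) = (\<Sum>k<n. G k)"
  by (rule sum.reindex_bij_witness[where i="\<lambda>k. n - k" and j="\<lambda>i. n - i"]) auto

definition cyclic_sum :: "('a, 'b::comm_monoid_add) mould \<Rightarrow> 'a list \<Rightarrow> 'b" where
  "cyclic_sum A w = (\<Sum>i<length w. A (rotate i w))"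

lemma circ_neutral_iff_cyclic_sum:
  "circ_neutral A \<longleftrightarrow> (\<forall>w. 1 < length w \<longrightarrow> cyclic_sum A w = 0)"
  by (simp add: circ_neutral_def cyclic_sum_def)

lemma cyclic_sum_eq_sum_rotate_reverse:
  "cyclic_sum A c = (\<Sum>i<length c. A (rotate (length c - i) c))"
  "cyclic_sum A c = (\<Sum>i\<in>{1..length c}. A (rotate (length c - i) c))"
proof -
  have "A (rotate (x + length c) c) = A (rotate x c)" for x
    by (metis mod_add_self2 rotate_conv_mod)
  then show "cyclic_sum A c = (\<Sum>i<length c. A (rotate (length c - i) c))"
    unfolding cyclic_sum_def by (rule sum_lessThan_reverse_periodic[symmetric])
  show "cyclic_sum A c = (\<Sum>i\<in>{1..length c}. A (rotate (length c - i) c))"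
    unfolding cyclic_sum_def by (rule sum_atLeastAtMost_reverse[symmetric])
qed

lemma mu_rotate:
  "mu X Y (rotate k w) = (\<Sum>i\<le>length w. X (cyclic_seg w k i) * Y (cyclic_seg w (k + i) (length w - i)))"
  unfolding mu_def by (intro sum.cong) (auto simp: rotate_eq_cyclic_seg take_cyclic_seg drop_cyclic_seg)

lemma cyclic_sum_mu_commute: "cyclic_sum (mu A B) w = cyclic_sum (mu B A) w"
proof -
  define r where "r = length w"
  have shift: "(\<Sum>k<r. B (cyclic_seg w k (r - i)) * A (cyclic_seg w (k + (r - i)) i))
      = (\<Sum>k<r. A (cyclic_seg w k i) * B (cyclic_seg w (k + i) (r - i)))" if "i \<le> r" for i
  proof -
    have "(\<Sum>k<r. B (cyclic_seg w k (r - i)) * A (cyclic_seg w (k + (r - i)) i))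
        = (\<Sum>k<r. B (cyclic_seg w (k + i) (r - i)) * A (cyclic_seg w (k + i + (r - i)) i))"
      by (rule sum_lessThan_shift_periodic[symmetric])
        (metis cyclic_seg_add_length(1) add.commute add.left_commute r_def)
    also have "\<dots> = (\<Sum>k<r. A (cyclic_seg w k i) * B (cyclic_seg w (k + i) (r - i)))"
      using that by (simp add: r_def mult.commute add.assoc)
    finally show ?thesis .
  qed
  have "cyclic_sum (mu B A) w = (\<Sum>j\<le>r. \<Sum>k<r. B (cyclic_seg w k j) * A (cyclic_seg w (k + j) (r - j)))"
    unfolding cyclic_sum_def mu_rotate r_def by (rule sum.swap)
  also have "\<dots> = (\<Sum>i\<le>r. \<Sum>k<r. B (cyclic_seg w k (r - i)) * A (cyclic_seg w (k + (r - i)) i))"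
    by (rule sum.reindex_bij_witness[where i="\<lambda>i. r - i" and j="\<lambda>i. r - i"]) auto
  also have "\<dots> = (\<Sum>i\<le>r. \<Sum>k<r. A (cyclic_seg w k i) * B (cyclic_seg w (k + i) (r - i)))"
    by (intro sum.cong refl shift) simp
  also have "\<dots> = cyclic_sum (mu A B) w"
    unfolding cyclic_sum_def mu_rotate r_def by (rule sum.swap[symmetric])
  finally show ?thesis by simp
qed

lemma cyclic_sum_lu: "cyclic_sum (lu A B) w = 0"
  using cyclic_sum_mu_commute[of A B w]
  by (simp add: cyclic_sum_def lu_def sum_subtractf)

definition centred_block :: "('a::ab_group_add, 'b) mould \<Rightarrow> 'a list \<Rightarrow> nat \<Rightarrow> nat \<Rightarrow> nat \<Rightarrow> 'b" where
  "centred_block B w c l p = B (map (\<lambda>x. x - w ! (c mod length w)) (cyclic_seg w p l))"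

lemma centred_block_add_length [simp]:
  "centred_block B w (c + length w) l (p + length w) = centred_block B w c l p"
  by (simp add: centred_block_def)

lemma sum_cyclic_block_shift:
  fixes A :: "('a, 'b::semiring_0) mould"
  assumes r: "r = length w" and il: "i + l \<le> r" and f: "\<And>p. f (p + r) = f p"
  shows "(\<Sum>k<r. A (cyclic_seg w k i @ cyclic_seg w (k + i + l) (r - i - l)) * f (k + i))
       = (\<Sum>p<r. A (rotate (r - l - i) (cyclic_seg w (p + l) (r - l))) * f p)"
proof -
  define G where "G p = A (rotate (r - l - i) (cyclic_seg w (p + l) (r - l))) * f p" for p
  have G_periodic: "G (p + r) = G p" for p
    using f[of p] cyclic_seg_add_length(1)[of w "p + l"] by (simp add: G_def r ac_simps)
  have "rotate (r - l - i) (cyclic_seg w (k + i + l) (r - l))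
      = cyclic_seg w (length w + k) i @ cyclic_seg w (k + i + l) (r - i - l)" for k
  proof -
    have "k + i + l + (r - l - i) = length w + k" "r - l - (r - l - i) = i"
      using il r by simp_all
    then show ?thesis
      using il by (simp add: rotate_cyclic_seg ac_simps)
  qed
  then have "(\<Sum>k<r. A (cyclic_seg w k i @ cyclic_seg w (k + i + l) (r - i - l)) * f (k + i))
      = (\<Sum>k<r. G (k + i))"
    by (simp add: G_def)
  also have "\<dots> = (\<Sum>p<r. G p)"
    using G_periodic by (rule sum_lessThan_shift_periodic)
  finally show ?thesis by (simp add: G_def)
qed

lemma sum_block_insertions_regroup:
  fixes A :: "('a, 'b::comm_semiring_0) mould"
  assumes r: "r = length w" and I: "\<And>l. I l \<subseteq> {..r - l}" and f: "\<And>l p. f l (p + r) = f l p"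
  shows "(\<Sum>k<r. \<Sum>l\<in>{1..<r}. \<Sum>i\<in>I l.
            A (cyclic_seg w k i @ cyclic_seg w (k + i + l) (r - i - l)) * f l (k + i))
       = (\<Sum>l\<in>{1..<r}. \<Sum>p<r. f l p * (\<Sum>i\<in>I l. A (rotate (r - l - i) (cyclic_seg w (p + l) (r - l)))))"
proof -
  have fin: "finite (I l)" for l
    using I by (rule finite_subset) simp
  have "(\<Sum>k<r. \<Sum>l\<in>{1..<r}. \<Sum>i\<in>I l.
            A (cyclic_seg w k i @ cyclic_seg w (k + i + l) (r - i - l)) * f l (k + i))
      = (\<Sum>l\<in>{1..<r}. \<Sum>i\<in>I l. \<Sum>k<r.
            A (cyclic_seg w k i @ cyclic_seg w (k + i + l) (r - i - l)) * f l (k + i))"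
    by (simp add: sum.swap[of _ "{..<r}"] sum.swap[of _ "{..<r}" "I _"])
  also have "\<dots> = (\<Sum>l\<in>{1..<r}. \<Sum>i\<in>I l. \<Sum>p<r.
            A (rotate (r - l - i) (cyclic_seg w (p + l) (r - l))) * f l p)"
    by (intro sum.cong refl sum_cyclic_block_shift[OF r] f) (use I in fastforce)
  also have "\<dots> = (\<Sum>l\<in>{1..<r}. \<Sum>p<r. f l p * (\<Sum>i\<in>I l. A (rotate (r - l - i) (cyclic_seg w (p + l) (r - l)))))"
    by (simp add: sum.swap[of _ "I _"] sum_distrib_left mult.commute)
  finally show ?thesis .
qed

lemma amit_rotate:
  "amit B A (rotate k w) = (\<Sum>l\<in>{1..<length w}. \<Sum>i<length w - l.
      A (cyclic_seg w k i @ cyclic_seg w (k + i + l) (length w - i - l))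
        * centred_block B w (k + i + l) l (k + i))"
proof -
  define r where "r = length w"
  define c where "c = cyclic_seg w k r"
  have "amit B A (rotate k w) = (\<Sum>j\<in>{0..<r}. \<Sum>i\<in>{0..<j}.
      A (take i c @ drop j c) * B (map (\<lambda>x. x - c ! j) (take (j - i) (drop i c))))"
    by (simp add: amit_def rotate_eq_cyclic_seg c_def r_def atLeast0LessThan)
  also have "\<dots> = (\<Sum>l\<in>{1..<r}. \<Sum>i\<in>{0..<r - l}.
      A (take i c @ drop (i + l) c) * B (map (\<lambda>x. x - c ! (i + l)) (take (i + l - i) (drop i c))))"
    by (subst sum_pairs_by_gap) simp
  also have "\<dots> = (\<Sum>l\<in>{1..<r}. \<Sum>i<r - l.
      A (cyclic_seg w k i @ cyclic_seg w (k + i + l) (r - i - l))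
        * centred_block B w (k + i + l) l (k + i))"
    by (intro sum.cong refl)
      (auto simp: c_def r_def centred_block_def take_cyclic_seg drop_cyclic_seg add.assoc)
  finally show ?thesis by (simp add: r_def)
qed

lemma anit_rotate:
  "anit B A (rotate k w) = (\<Sum>l\<in>{1..<length w}. \<Sum>i\<in>{1..length w - l}.
      A (cyclic_seg w k i @ cyclic_seg w (k + i + l) (length w - i - l))
        * centred_block B w (k + i + length w - 1) l (k + i))"
proof -
  define r where "r = length w"
  define c where "c = cyclic_seg w k r"
  have "anit B A (rotate k w) = (\<Sum>j\<in>{1..<r + 1}. \<Sum>i\<in>{1..<j}.
      A (take i c @ drop j c) * B (map (\<lambda>x. x - c ! (i - 1)) (take (j - i) (drop i c))))"
    by (simp add: anit_def rotate_eq_cyclic_seg c_def r_def atLeastLessThanSuc_atLeastAtMost)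
  also have "\<dots> = (\<Sum>l\<in>{1..<r}. \<Sum>i\<in>{1..r - l}.
      A (take i c @ drop (i + l) c) * B (map (\<lambda>x. x - c ! (i - 1)) (take (i + l - i) (drop i c))))"
    by (subst sum_pairs_by_gap) (auto intro!: sum.cong simp: atLeastLessThanSuc_atLeastAtMost Suc_diff_le)
  also have "\<dots> = (\<Sum>l\<in>{1..<r}. \<Sum>i\<in>{1..r - l}.
      A (cyclic_seg w k i @ cyclic_seg w (k + i + l) (r - i - l))
        * centred_block B w (k + i + r - 1) l (k + i))"
  proof (intro sum.cong refl)
    fix l i assume "l \<in> {1..<r}" "i \<in> {1..r - l}"
    moreover have "(k + i + r - 1) mod r = (k + (i - 1)) mod r" if "1 \<le> i"
      using that mod_add_self2[of "k + (i - 1)" r] by simp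
    ultimately show "A (take i c @ drop (i + l) c) * B (map (\<lambda>x. x - c ! (i - 1)) (take (i + l - i) (drop i c)))
        = A (cyclic_seg w k i @ cyclic_seg w (k + i + l) (r - i - l)) * centred_block B w (k + i + r - 1) l (k + i)"
      by (auto simp: c_def r_def centred_block_def take_cyclic_seg drop_cyclic_seg add.assoc)
  qed
  finally show ?thesis by (simp add: r_def)
qed

lemma cyclic_sum_amit:
  "cyclic_sum (amit B A) w = (\<Sum>l\<in>{1..<length w}. \<Sum>p<length w.
      centred_block B w (p + l) l p * cyclic_sum A (cyclic_seg w (p + l) (length w - l)))"
proof -
  define r where "r = length w"
  have periodic: "centred_block B w (p + r + l) l (p + r) = centred_block B w (p + l) l p" for l p
    using centred_block_add_length[of B w "p + l" l p] by (simp add: r_def ac_simps)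
  have "cyclic_sum (amit B A) w = (\<Sum>k<r. \<Sum>l\<in>{1..<r}. \<Sum>i<r - l.
      A (cyclic_seg w k i @ cyclic_seg w (k + i + l) (r - i - l))
        * (\<lambda>l p. centred_block B w (p + l) l p) l (k + i))"
    by (simp add: cyclic_sum_def amit_rotate r_def)
  also have "\<dots> = (\<Sum>l\<in>{1..<r}. \<Sum>p<r. centred_block B w (p + l) l p
      * (\<Sum>i<r - l. A (rotate (r - l - i) (cyclic_seg w (p + l) (r - l)))))"
    using periodic by (subst sum_block_insertions_regroup[OF r_def]) auto
  also have "\<dots> = (\<Sum>l\<in>{1..<r}. \<Sum>p<r.
      centred_block B w (p + l) l p * cyclic_sum A (cyclic_seg w (p + l) (r - l)))"
    by (intro sum.cong refl arg_cong[where f="(*) _"])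
      (subst cyclic_sum_eq_sum_rotate_reverse(1), simp)
  finally show ?thesis by (simp add: r_def)
qed

lemma cyclic_sum_anit:
  "cyclic_sum (anit B A) w = (\<Sum>l\<in>{1..<length w}. \<Sum>p<length w.
      centred_block B w (p + length w - 1) l p * cyclic_sum A (cyclic_seg w (p + l) (length w - l)))"
proof -
  define r where "r = length w"
  have periodic: "centred_block B w (p + r + r - 1) l (p + r) = centred_block B w (p + r - 1) l p" for l p
  proof -
    have "p + r + r - 1 = p + r - 1 + length w" by (simp add: r_def)
    then show ?thesis using centred_block_add_length[of B w "p + r - 1" l p] by (simp add: r_def)
  qed
  have "cyclic_sum (anit B A) w = (\<Sum>k<r. \<Sum>l\<in>{1..<r}. \<Sum>i\<in>{1..r - l}.
      A (cyclic_seg w k i @ cyclic_seg w (k + i + l) (r - i - l))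
        * (\<lambda>l p. centred_block B w (p + r - 1) l p) l (k + i))"
    by (simp add: cyclic_sum_def anit_rotate r_def)
  also have "\<dots> = (\<Sum>l\<in>{1..<r}. \<Sum>p<r. centred_block B w (p + r - 1) l p
      * (\<Sum>i\<in>{1..r - l}. A (rotate (r - l - i) (cyclic_seg w (p + l) (r - l)))))"
    using periodic by (subst sum_block_insertions_regroup[OF r_def]) auto
  also have "\<dots> = (\<Sum>l\<in>{1..<r}. \<Sum>p<r.
      centred_block B w (p + r - 1) l p * cyclic_sum A (cyclic_seg w (p + l) (r - l)))"
    by (intro sum.cong refl arg_cong[where f="(*) _"])
      (subst cyclic_sum_eq_sum_rotate_reverse(2), simp)
  finally show ?thesis by (simp add: r_def)
qed

lemma cyclic_sum_arit:
  assumes "circ_neutral A"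
  shows "cyclic_sum (arit B A) w = 0"
proof -
  define r where "r = length w"
  have "centred_block B w (p + l) l p * cyclic_sum A (cyclic_seg w (p + l) (r - l))
      = centred_block B w (p + r - 1) l p * cyclic_sum A (cyclic_seg w (p + l) (r - l))"
    if "l \<in> {1..<r}" for l p
  proof (cases "1 < r - l")
    case True
    with assms have "cyclic_sum A (cyclic_seg w (p + l) (r - l)) = 0"
      by (simp add: circ_neutral_iff_cyclic_sum)
    then show ?thesis by simp
  next
    case False
    with that have "p + l = p + r - 1" by auto
    then show ?thesis by simp
  qed
  then have "cyclic_sum (amit B A) w = cyclic_sum (anit B A) w"
    unfolding cyclic_sum_amit cyclic_sum_anit r_def by (intro sum.cong refl) simp
  then show ?thesis
    by (simp add: cyclic_sum_def arit_def sum_subtractf)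
qed

lemma in_ARI_ari: "in_ARI (ari A B)"
  by (simp add: in_ARI_def ari_def arit_def amit_def anit_def lu_def mu_def)

lemma circ_neutral_ari:
  assumes "circ_neutral A" and "circ_neutral B"
  shows "circ_neutral (ari A B)"
proof -
  have "cyclic_sum (ari A B) w
      = cyclic_sum (arit B A) w - cyclic_sum (arit A B) w + cyclic_sum (lu A B) w" for w
    by (simp add: cyclic_sum_def ari_def sum_subtractf sum.distrib)
  then show ?thesis
    using assms by (simp add: circ_neutral_iff_cyclic_sum cyclic_sum_arit cyclic_sum_lu)
qed

theorem lemma21:
  fixes A B :: "('a::ab_group_add, 'b::comm_ring_1) mould"
  assumes "in_ARI A" and "in_ARI B"
    and "circ_neutral A" and "circ_neutral B"
  shows "in_ARI (ari A B) \<and> circ_neutral (ari A B)"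
  using assms(3,4) by (simp add: in_ARI_ari circ_neutral_ari)

end
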